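(* Let $G$ be a $(k+1)$-critical hypergraph with $k\ge2$, and let $S\subseteq V(G)$ be a separating vertex set of $G$ with $|S|\le2$. Then $S=\{v,w\}$ consists of two distinct vertices, $S$ is independent in $G$ (i.e. $\{v,w\}\notin E(G)$), and $G\div S$ has exactly two components $H_1$ and $H_2$. Moreover, letting $G_i=G[V(H_i)\cup S]$ for $i\in\{1,2\}$, the notation can be chosen so that some $k$-coloring $\varphi_1$ of $G_1$ satisfies $\varphi_1(v)=\varphi_1(w)$, and then: (a) every $k$-coloring $\varphi$ of $G_1$ satisfies $\varphi(v)=\varphi(w)$, and every $k$-coloring $\varphi$ of $G_2$ satisfies $\varphi(v)\ne\varphi(w)$; (b) the hypergraph $G_1+vw$ obtained from $G_1$ by adding the ordinary edge $vw$ is $(k+1)$-critical; (c) the hypergraph obtained from $G_2$ by identifying $v$ and $w$ into a single new vertex is $(k+1)$-critical.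
   Context: A hypergraph is a pair $G=(V,E)$ of finite sets with $E\subseteq 2^V$ and $|e|\ge2$ for all $e\in E$ (no multiple edges). A $k$-coloring is a map $V(G)\to\{1,\dots,k\}$ such that every edge contains two vertices of different colors; $\chi$ is the chromatic number. $G$ is $(k+1)$-critical if $\chi(G)=k+1$ but $\chi(H)\le k$ for every proper subhypergraph $H$. For $X\subseteq V(G)$: $G[X]$ has vertex set $X$ and the edges of $G$ contained in $X$; $G(X)$ has vertex set $X$ and edge set $\{e\cap X: e\in E(G), |e\cap X|\ge2\}$; $G\div S=G(V(G)\setminus S)$. Components are maximal connected subhypergraphs (connected: any two vertices joined by a hyperpath, i.e. a sequence of distinct vertices and distinct edges with consecutive vertices in the intermediate edge). A set $S\subseteq V(G)$ is a separating vertex set if $G$ is the union of two induced subhypergraphs $G_1,G_2$ with $V(G_1)\cap V(G_2)=S$ and $|V(G_i)|>|S|$. Identifying $v$ and $w$ in $G_2$ means replacing them by a new vertex $v^*$ and replacing each edge $e$ meeting $\{v,w\}$ by $(e\setminus\{v,w\})\cup\{v^*\}$. *)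

theory Defs
  imports Main
begin

type_synonym 'a hg = "'a set \<times> 'a set set"

abbreviation verts :: "'a hg \<Rightarrow> 'a set" where "verts G \<equiv> fst G"
abbreviation edges :: "'a hg \<Rightarrow> 'a set set" where "edges G \<equiv> snd G"

definition hypergraph :: "'a hg \<Rightarrow> bool" where
  "hypergraph G \<longleftrightarrow> finite (verts G) \<and> edges G \<subseteq> Pow (verts G) \<and> (\<forall>e\<in>edges G. card e \<ge> 2)"

definition coloring :: "'a hg \<Rightarrow> nat \<Rightarrow> ('a \<Rightarrow> nat) \<Rightarrow> bool" where
  "coloring G k f \<longleftrightarrow> (\<forall>x\<in>verts G. f x \<in> {1..k}) \<and>
     (\<forall>e\<in>edges G. \<exists>x\<in>e. \<exists>y\<in>e. f x \<noteq> f y)"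

definition chi :: "'a hg \<Rightarrow> nat" where
  "chi G = (LEAST k. \<exists>f. coloring G k f)"

definition subhypergraph :: "'a hg \<Rightarrow> 'a hg \<Rightarrow> bool" where
  "subhypergraph H G \<longleftrightarrow> hypergraph H \<and> verts H \<subseteq> verts G \<and> edges H \<subseteq> edges G"

text \<open>critical k G: G is (k+1)-critical.\<close>
definition critical :: "nat \<Rightarrow> 'a hg \<Rightarrow> bool" where
  "critical k G \<longleftrightarrow> hypergraph G \<and> chi G = k + 1 \<and>
     (\<forall>H. subhypergraph H G \<and> H \<noteq> G \<longrightarrow> chi H \<le> k)"

definition induced :: "'a hg \<Rightarrow> 'a set \<Rightarrow> 'a hg" where
  "induced G X = (X, {e \<in> edges G. e \<subseteq> X})"

definition restr :: "'a hg \<Rightarrow> 'a set \<Rightarrow> 'a hg" where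
  "restr G X = (X, {e \<inter> X | e. e \<in> edges G \<and> card (e \<inter> X) \<ge> 2})"

definition delete :: "'a hg \<Rightarrow> 'a set \<Rightarrow> 'a hg" where
  "delete G S = restr G (verts G - S)"

definition hyperpath :: "'a hg \<Rightarrow> 'a list \<Rightarrow> 'a set list \<Rightarrow> bool" where
  "hyperpath G xs es \<longleftrightarrow> xs \<noteq> [] \<and> distinct xs \<and> distinct es \<and>
     length es + 1 = length xs \<and> set xs \<subseteq> verts G \<and> set es \<subseteq> edges G \<and>
     (\<forall>i < length es. xs ! i \<in> es ! i \<and> xs ! Suc i \<in> es ! i)"

definition connected_hg :: "'a hg \<Rightarrow> bool" where
  "connected_hg G \<longleftrightarrow> verts G \<noteq> {} \<and>
     (\<forall>x\<in>verts G. \<forall>y\<in>verts G. \<exists>xs es. hyperpath G xs es \<and> hd xs = x \<and> last xs = y)"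

definition component :: "'a hg \<Rightarrow> 'a hg \<Rightarrow> bool" where
  "component G H \<longleftrightarrow> subhypergraph H G \<and> connected_hg H \<and>
     (\<forall>H'. subhypergraph H' G \<and> connected_hg H' \<and> verts H \<subseteq> verts H' \<and> edges H \<subseteq> edges H'
        \<longrightarrow> H' = H)"

definition separating :: "'a hg \<Rightarrow> 'a set \<Rightarrow> bool" where
  "separating G S \<longleftrightarrow> (\<exists>X1 X2. X1 \<subseteq> verts G \<and> X2 \<subseteq> verts G \<and>
     G = (X1 \<union> X2, edges (induced G X1) \<union> edges (induced G X2)) \<and>
     X1 \<inter> X2 = S \<and> card X1 > card S \<and> card X2 > card S)"

text \<open>Identifying v and w: new vertex is None, old vertices x become Some x.\<close>
definition identify :: "'a hg \<Rightarrow> 'a \<Rightarrow> 'a \<Rightarrow> 'a option hg" where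
  "identify G v w =
    (Some ` (verts G - {v, w}) \<union> {None},
     (\<lambda>e. if e \<inter> {v, w} \<noteq> {} then Some ` (e - {v, w}) \<union> {None} else Some ` e) ` edges G)"

definition add_edge :: "'a hg \<Rightarrow> 'a \<Rightarrow> 'a \<Rightarrow> 'a hg" where
  "add_edge G v w = (verts G, insert {v, w} (edges G))"

end

theory Submission
  imports Defs "HOL-Combinatorics.Transposition"
begin

text \<open>Call a set U of vertices outside S separated by S if every edge meeting U has all its
  vertices outside S in U. For S \<subseteq> {v, w}, G is the union of G[U \<union> S] and G[(V - S - U) \<union> S],
  which meet in S, and k-colorings of the two pieces that agree on whether v and w get the same
  color glue, after permuting colors, to a k-coloring of G. So in a (k+1)-critical G, where both
  pieces are k-colorable, their k-colorings have opposite patterns on v and w. This excludes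
  |S| \<le> 1 and the edge vw, and it excludes three disjoint nonempty separated sets, because three
  patterns cannot be pairwise opposite; hence G \<div> S has exactly two components, one side forcing
  \<phi> v = \<phi> w and the other \<phi> v \<noteq> \<phi> w. A proper subhypergraph of G1 + vw, or of G2 with v and w
  identified, together with the other side forms a proper subhypergraph of G, and a k-coloring
  of that restricts, respectively descends, to it.\<close>

lemma two_le_card_obtains:
  assumes "2 \<le> card e"
  obtains x y where "x \<in> e" "y \<in> e" "x \<noteq> y"
proof -
  have "finite e" using assms card.infinite by fastforce
  then show ?thesis using assms card_le_Suc0_iff_eq[of e] that by auto
qed

lemma hypergraph_induced:
  "hypergraph G \<Longrightarrow> Y \<subseteq> verts G \<Longrightarrow> hypergraph (induced G Y)"
  by (auto simp: hypergraph_def induced_def intro: finite_subset)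

lemma subhypergraphI:
  assumes "hypergraph G" "verts H \<subseteq> verts G" "edges H \<subseteq> edges G" "\<forall>e\<in>edges H. e \<subseteq> verts H"
  shows "subhypergraph H G"
  using assms by (auto simp: subhypergraph_def hypergraph_def intro: finite_subset)

lemma coloring_mono_colors: "coloring H j f \<Longrightarrow> j \<le> k \<Longrightarrow> coloring H k f"
  by (auto simp: coloring_def)

lemma coloring_subhypergraph:
  "coloring G k f \<Longrightarrow> verts H \<subseteq> verts G \<Longrightarrow> edges H \<subseteq> edges G \<Longrightarrow> coloring H k f"
  unfolding coloring_def by blast

lemma coloring_induced_mono:
  "coloring (induced G Y) k f \<Longrightarrow> Y' \<subseteq> Y \<Longrightarrow> coloring (induced G Y') k f"
  by (rule coloring_subhypergraph) (auto simp: induced_def)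

lemma coloring_pair_edge: "coloring H k f \<Longrightarrow> {v, w} \<in> edges H \<Longrightarrow> f v \<noteq> f w"
  unfolding coloring_def by fastforce

lemma coloring_card_verts:
  assumes "hypergraph H"
  shows "\<exists>f. coloring H (card (verts H)) f"
proof -
  obtain g where g: "bij_betw g (verts H) {0..<card (verts H)}"
    using ex_bij_betw_finite_nat[of "verts H"] assms unfolding hypergraph_def by blast
  have "coloring H (card (verts H)) (\<lambda>x. g x + 1)"
    unfolding coloring_def
  proof (intro conjI ballI)
    fix x assume "x \<in> verts H"
    then have "g x \<in> {0..<card (verts H)}" using g by (auto simp: bij_betw_def)
    then show "g x + 1 \<in> {1..card (verts H)}" by simp
  next
    fix e assume e: "e \<in> edges H"
    then have "2 \<le> card e" using assms by (simp add: hypergraph_def)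
    then obtain x y where xy: "x \<in> e" "y \<in> e" "x \<noteq> y" by (rule two_le_card_obtains)
    moreover have "e \<subseteq> verts H" using e assms by (auto simp: hypergraph_def)
    ultimately have "g x \<noteq> g y" using g by (auto simp: bij_betw_def inj_on_def)
    then show "\<exists>x\<in>e. \<exists>y\<in>e. g x + 1 \<noteq> g y + 1" using xy by auto
  qed
  then show ?thesis by blast
qed

lemma chi_le: "coloring H k f \<Longrightarrow> chi H \<le> k"
  unfolding chi_def by (auto intro: Least_le)

lemma coloring_chi: "hypergraph H \<Longrightarrow> \<exists>f. coloring H (chi H) f"
  unfolding chi_def by (rule LeastI_ex) (use coloring_card_verts in blast)

lemma critical_not_colorable: "critical k G \<Longrightarrow> \<not> coloring G k f"
  using chi_le by (fastforce simp: critical_def)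

lemma critical_proper_colorable:
  "critical k G \<Longrightarrow> subhypergraph H G \<Longrightarrow> H \<noteq> G \<Longrightarrow> \<exists>f. coloring H k f"
  using coloring_chi coloring_mono_colors unfolding critical_def subhypergraph_def by blast

lemma criticalI:
  assumes "hypergraph H" "coloring H (k + 1) f" "\<And>f. \<not> coloring H k f"
    and "\<And>H'. subhypergraph H' H \<Longrightarrow> H' \<noteq> H \<Longrightarrow> \<exists>f. coloring H' k f"
  shows "critical k H"
proof -
  have "\<not> chi H \<le> k" using coloring_chi[OF assms(1)] coloring_mono_colors assms(3) by blast
  then have "chi H = k + 1" using chi_le[OF assms(2)] by simp
  then show ?thesis using assms(1,4) chi_le unfolding critical_def by blast
qed

lemma critical_induced_colorable:
  assumes "critical k G" "Y \<subseteq> verts G" "Y \<noteq> verts G"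
  shows "\<exists>f. coloring (induced G Y) k f"
proof (rule critical_proper_colorable[OF assms(1)])
  have "hypergraph G" using assms(1) by (simp add: critical_def)
  from hypergraph_induced[OF this assms(2)] show "subhypergraph (induced G Y) G"
    using assms(2) by (auto simp: subhypergraph_def induced_def)
  show "induced G Y \<noteq> G" by (metis assms(3) fst_conv induced_def)
qed

section \<open>Gluing colorings along at most two vertices\<close>

lemma bij_betw_map_pair:
  assumes "a \<in> A" "b \<in> A" "c \<in> A" "d \<in> A" "a = b \<longleftrightarrow> c = d"
  obtains \<pi> where "bij_betw \<pi> A A" "\<pi> a = c" "\<pi> b = d"
proof
  let ?b' = "transpose a c b"
  have "?b' \<in> A" using assms(1-3) by (simp add: transpose_def)
  then show "bij_betw (transpose ?b' d \<circ> transpose a c) A A"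
    using assms(1,3,4) by (intro bij_betw_trans[of _ A A]) simp_all
  show "(transpose ?b' d \<circ> transpose a c) a = c"
    using assms(5) by (auto simp: transpose_def)
  show "(transpose ?b' d \<circ> transpose a c) b = d"
    by simp
qed

lemma coloring_permute:
  assumes "coloring H k f" "bij_betw \<pi> {1..k} {1..k}" "\<forall>e\<in>edges H. e \<subseteq> verts H"
  shows "coloring H k (\<pi> \<circ> f)"
  unfolding coloring_def
proof (intro conjI ballI)
  fix x assume "x \<in> verts H"
  then show "(\<pi> \<circ> f) x \<in> {1..k}" using assms(1,2) by (auto simp: coloring_def bij_betw_def)
next
  fix e assume e: "e \<in> edges H"
  then obtain x y where xy: "x \<in> e" "y \<in> e" "f x \<noteq> f y" using assms(1) unfolding coloring_def by blast
  have "\<forall>z\<in>verts H. f z \<in> {1..k}" using assms(1) by (simp add: coloring_def)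
  then have "f x \<in> {1..k}" "f y \<in> {1..k}" using xy e assms(3) by blast+
  then have "\<pi> (f x) \<noteq> \<pi> (f y)" using xy(3) assms(2) unfolding bij_betw_def inj_on_def by blast
  then show "\<exists>x\<in>e. \<exists>y\<in>e. (\<pi> \<circ> f) x \<noteq> (\<pi> \<circ> f) y" using xy by auto
qed

lemma coloring_glue:
  assumes "verts G = Y1 \<union> Y2" "\<forall>e\<in>edges G. e \<subseteq> Y1 \<or> e \<subseteq> Y2"
    and "coloring (induced G Y1) k f1" "coloring (induced G Y2) k f2" "\<forall>x\<in>Y1 \<inter> Y2. f1 x = f2 x"
  shows "coloring G k (\<lambda>x. if x \<in> Y1 then f1 x else f2 x)"
  unfolding coloring_def
proof (intro conjI ballI)
  fix x assume "x \<in> verts G"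
  then show "(if x \<in> Y1 then f1 x else f2 x) \<in> {1..k}"
    using assms unfolding coloring_def induced_def by auto
next
  fix e assume e: "e \<in> edges G"
  show "\<exists>x\<in>e. \<exists>y\<in>e. (if x \<in> Y1 then f1 x else f2 x) \<noteq> (if y \<in> Y1 then f1 y else f2 y)"
  proof (cases "e \<subseteq> Y1")
    case True
    then obtain x y where "x \<in> e" "y \<in> e" "f1 x \<noteq> f1 y"
      using assms(3) e unfolding coloring_def induced_def by auto
    then show ?thesis using True by (metis subsetD)
  next
    case False
    then have "e \<subseteq> Y2" using assms(2) e by blast
    then obtain x y where xy: "x \<in> e" "y \<in> e" "f2 x \<noteq> f2 y"
      using assms(4) e unfolding coloring_def induced_def by auto
    have "\<forall>z\<in>e. (if z \<in> Y1 then f1 z else f2 z) = f2 z" using \<open>e \<subseteq> Y2\<close> assms(5) by auto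
    then show ?thesis using xy by metis
  qed
qed

text \<open>After permuting the colors of the second coloring, the two colorings agree on the
  common vertices as soon as they agree on which common vertices get equal colors.\<close>
lemma colorable_glue:
  assumes "verts G = Y1 \<union> Y2" "\<forall>e\<in>edges G. e \<subseteq> Y1 \<or> e \<subseteq> Y2" "Y1 \<inter> Y2 \<subseteq> {v, w}"
    and "coloring (induced G Y1) k f1" "coloring (induced G Y2) k f2"
    and "\<forall>x\<in>Y1 \<inter> Y2. \<forall>y\<in>Y1 \<inter> Y2. f1 x = f1 y \<longleftrightarrow> f2 x = f2 y"
  shows "\<exists>f. coloring G k f"
proof -
  obtain \<pi> where \<pi>: "bij_betw \<pi> {1..k} {1..k}" "\<forall>x\<in>Y1 \<inter> Y2. \<pi> (f2 x) = f1 x"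
  proof (cases "Y1 \<inter> Y2 = {}")
    case True
    then show ?thesis using that[of id] by auto
  next
    case False
    then obtain p q where pq: "p \<in> Y1 \<inter> Y2" "q \<in> Y1 \<inter> Y2" "Y1 \<inter> Y2 \<subseteq> {p, q}"
      using assms(3) by blast
    have "f2 p \<in> {1..k}" "f2 q \<in> {1..k}" "f1 p \<in> {1..k}" "f1 q \<in> {1..k}"
      using assms(4,5) pq(1,2) by (auto simp: coloring_def induced_def)
    moreover have "f2 p = f2 q \<longleftrightarrow> f1 p = f1 q" using assms(6) pq(1,2) by blast
    ultimately obtain \<pi> where "bij_betw \<pi> {1..k} {1..k}" "\<pi> (f2 p) = f1 p" "\<pi> (f2 q) = f1 q"
      by (rule bij_betw_map_pair)
    then show ?thesis using that pq(3) by blast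
  qed
  have "coloring (induced G Y2) k (\<pi> \<circ> f2)"
    by (rule coloring_permute[OF assms(5) \<pi>(1)]) (auto simp: induced_def)
  from coloring_glue[OF assms(1,2,4) this] \<pi>(2) show ?thesis by auto
qed

section \<open>Connectivity\<close>

definition adjacent :: "'a hg \<Rightarrow> 'a \<Rightarrow> 'a \<Rightarrow> bool" where
  "adjacent G x y \<longleftrightarrow> (\<exists>e\<in>edges G. x \<in> e \<and> y \<in> e)"

definition reach_class :: "'a hg \<Rightarrow> 'a \<Rightarrow> 'a set" where
  "reach_class G x = {y. (adjacent G)\<^sup>*\<^sup>* x y}"

definition component_of :: "'a hg \<Rightarrow> 'a \<Rightarrow> 'a hg" where
  "component_of G x = induced G (reach_class G x)"

lemma in_reach_class: "x \<in> reach_class G x"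
  by (simp add: reach_class_def)

lemma reach_class_eq:
  assumes "y \<in> reach_class G x"
  shows "reach_class G y = reach_class G x"
proof -
  have "symp (adjacent G)" by (auto simp: symp_def adjacent_def)
  then have "symp (adjacent G)\<^sup>*\<^sup>*" by (rule symp_rtranclp)
  then have "(adjacent G)\<^sup>*\<^sup>* y x" using assms by (simp add: reach_class_def sympD)
  then show ?thesis
    using assms unfolding reach_class_def by (blast intro: rtranclp_trans)
qed

lemma reach_class_step:
  "y \<in> reach_class G x \<Longrightarrow> e \<in> edges G \<Longrightarrow> y \<in> e \<Longrightarrow> z \<in> e \<Longrightarrow> z \<in> reach_class G x"
  unfolding reach_class_def adjacent_def by (auto intro: rtranclp.rtrancl_into_rtrancl)

lemma reach_class_subset_verts:
  assumes "hypergraph G" "x \<in> verts G"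
  shows "reach_class G x \<subseteq> verts G"
proof
  fix y assume "y \<in> reach_class G x"
  then have "(adjacent G)\<^sup>*\<^sup>* x y" by (simp add: reach_class_def)
  then show "y \<in> verts G"
  proof induction
    case base
    then show ?case using assms(2) by simp
  next
    case (step y z)
    then show ?case using assms(1) unfolding adjacent_def hypergraph_def by blast
  qed
qed

lemma hyperpath_in_reach_class:
  assumes "hyperpath H xs es" "edges H \<subseteq> edges G"
  shows "set xs \<subseteq> reach_class G (hd xs)" "\<forall>e\<in>set es. e \<subseteq> reach_class G (hd xs)"
proof -
  have len: "length es + 1 = length xs" and ne: "xs \<noteq> []" using assms(1) by (auto simp: hyperpath_def)
  have step: "es ! i \<in> edges G" "xs ! i \<in> es ! i" "xs ! Suc i \<in> es ! i" if "i < length es" for i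
    using assms that unfolding hyperpath_def by (auto dest: nth_mem)
  have nth: "xs ! i \<in> reach_class G (hd xs)" if "i < length xs" for i
    using that
  proof (induction i)
    case 0
    then show ?case using ne in_reach_class by (simp add: hd_conv_nth)
  next
    case (Suc i)
    then show ?case using len step[of i] reach_class_step by simp
  qed
  then show "set xs \<subseteq> reach_class G (hd xs)" by (auto simp: in_set_conv_nth)
  show "\<forall>e\<in>set es. e \<subseteq> reach_class G (hd xs)"
  proof (intro ballI subsetI)
    fix e u assume "e \<in> set es" "u \<in> e"
    then obtain i where i: "i < length es" "es ! i = e" by (auto simp: in_set_conv_nth)
    then have "xs ! i \<in> reach_class G (hd xs)" using nth len by simp
    from reach_class_step[OF this step(1,2)[OF i(1)]] show "u \<in> reach_class G (hd xs)"
      using i \<open>u \<in> e\<close> by simp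
  qed
qed

lemma hyperpath_take:
  assumes "hyperpath G xs es" "i < length xs"
  shows "hyperpath G (take (Suc i) xs) (take i es)"
    "hd (take (Suc i) xs) = hd xs" "last (take (Suc i) xs) = xs ! i"
proof -
  have "length es + 1 = length xs" using assms(1) by (simp add: hyperpath_def)
  then show "hyperpath G (take (Suc i) xs) (take i es)"
    using assms set_take_subset[of "Suc i" xs] set_take_subset[of i es]
    unfolding hyperpath_def by auto
  show "hd (take (Suc i) xs) = hd xs" using assms(2) by (simp add: hd_conv_nth)
  show "last (take (Suc i) xs) = xs ! i" using assms(2) by (simp add: take_Suc_conv_app_nth)
qed

lemma hyperpath_snoc:
  assumes "hyperpath G xs es" "z \<notin> set xs" "e \<notin> set es" "e \<in> edges G" "last xs \<in> e" "z \<in> e"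
    "z \<in> verts G"
  shows "hyperpath G (xs @ [z]) (es @ [e])"
proof -
  have len: "length es + 1 = length xs" and ne: "xs \<noteq> []" using assms(1) by (auto simp: hyperpath_def)
  then have "xs ! length es = last xs" by (metis add_diff_cancel_right' last_conv_nth)
  then have "(xs @ [z]) ! j \<in> (es @ [e]) ! j \<and> (xs @ [z]) ! Suc j \<in> (es @ [e]) ! j"
    if "j < length (es @ [e])" for j
  proof (cases "j < length es")
    case True
    then show ?thesis using assms(1) len by (auto simp: hyperpath_def nth_append)
  next
    case False
    then have "j = length es" using that by simp
    then show ?thesis using \<open>xs ! length es = last xs\<close> assms(5,6) len by (simp add: nth_append)
  qed
  then show ?thesis using assms len unfolding hyperpath_def by auto
qed

text \<open>Extend the path along the walk; when the next vertex or edge is already on the path, cut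
  the path back to its first occurrence.\<close>
lemma reachable_hyperpath:
  assumes "hypergraph G" "x \<in> verts G" "(adjacent G)\<^sup>*\<^sup>* x y"
  shows "\<exists>xs es. hyperpath G xs es \<and> hd xs = x \<and> last xs = y"
  using assms(3)
proof (induction rule: rtranclp_induct)
  case base
  have "hyperpath G [x] []" using assms(2) by (simp add: hyperpath_def)
  then show ?case by force
next
  case (step y z)
  obtain xs es where p: "hyperpath G xs es" "hd xs = x" "last xs = y" using step.IH by blast
  obtain e where e: "e \<in> edges G" "y \<in> e" "z \<in> e" using step.hyps(2) by (auto simp: adjacent_def)
  have z: "z \<in> verts G" using e assms(1) by (auto simp: hypergraph_def)
  have len: "length es + 1 = length xs" and dist: "distinct es" using p(1) by (auto simp: hyperpath_def)
  consider (old_vertex) i where "i < length xs" "xs ! i = z"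
    | (old_edge) j where "z \<notin> set xs" "j < length es" "es ! j = e"
    | (fresh) "z \<notin> set xs" "e \<notin> set es"
    using in_set_conv_nth[of z xs] in_set_conv_nth[of e es] by blast
  then show ?case
  proof cases
    case old_vertex
    then show ?thesis using hyperpath_take[OF p(1) old_vertex(1)] p(2) by auto
  next
    case old_edge
    then have j: "j < length xs" using len by simp
    have "xs ! j \<in> e" using p(1) old_edge(2,3) by (auto simp: hyperpath_def)
    moreover have "e \<notin> set (take j es)"
      using dist old_edge(2,3) by (auto simp: in_set_conv_nth nth_eq_iff_index_eq)
    moreover have "z \<notin> set (take (Suc j) xs)" using old_edge(1) by (meson in_set_takeD)
    ultimately have "hyperpath G (take (Suc j) xs @ [z]) (take j es @ [e])"
      using hyperpath_snoc[OF hyperpath_take(1)[OF p(1) j]] hyperpath_take(3)[OF p(1) j] e z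
      by simp
    moreover have "hd (take (Suc j) xs @ [z]) = x"
      using hyperpath_take(2)[OF p(1) j] p(1,2) by (simp add: hyperpath_def)
    ultimately show ?thesis by auto
  next
    case fresh
    then have "hyperpath G (xs @ [z]) (es @ [e])" using hyperpath_snoc[OF p(1)] p(3) e z by simp
    moreover have "hd (xs @ [z]) = x" using p(1,2) by (simp add: hyperpath_def)
    ultimately show ?thesis by auto
  qed
qed

lemma connected_subset_reach_class:
  assumes "edges H \<subseteq> edges G" "connected_hg H" "x \<in> verts H"
  shows "verts H \<subseteq> reach_class G x"
proof
  fix u assume "u \<in> verts H"
  then obtain xs es where "hyperpath H xs es" "hd xs = x" "last xs = u"
    using assms(2,3) unfolding connected_hg_def by blast
  moreover from this have "xs \<noteq> []" by (simp add: hyperpath_def)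
  ultimately show "u \<in> reach_class G x" using hyperpath_in_reach_class(1)[OF _ assms(1)] by force
qed

lemma component_of_component:
  assumes "hypergraph G" "x \<in> verts G"
  shows "component G (component_of G x)"
proof -
  let ?C = "reach_class G x"
  have CV: "?C \<subseteq> verts G" by (rule reach_class_subset_verts[OF assms])
  have sub: "subhypergraph (component_of G x) G"
    using hypergraph_induced[OF assms(1) CV] CV
    by (auto simp: component_of_def subhypergraph_def induced_def)
  have conn: "connected_hg (component_of G x)"
    unfolding connected_hg_def
  proof (intro conjI ballI)
    show "verts (component_of G x) \<noteq> {}" using in_reach_class[of x G] by (auto simp: component_of_def induced_def)
    fix y z assume "y \<in> verts (component_of G x)" "z \<in> verts (component_of G x)"
    then have yz: "y \<in> ?C" "z \<in> ?C" by (auto simp: component_of_def induced_def)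
    then have "z \<in> reach_class G y" using reach_class_eq[OF yz(1)] by simp
    moreover have "y \<in> verts G" using yz(1) CV by blast
    ultimately obtain xs es where p: "hyperpath G xs es" "hd xs = y" "last xs = z"
      using reachable_hyperpath[OF assms(1)] unfolding reach_class_def by blast
    have C: "reach_class G (hd xs) = ?C" using reach_class_eq[OF yz(1)] p(2) by simp
    have "set es \<subseteq> edges G" using p(1) by (simp add: hyperpath_def)
    then have "set es \<subseteq> {e \<in> edges G. e \<subseteq> ?C}"
      using hyperpath_in_reach_class(2)[OF p(1) order_refl] C by auto
    moreover have "set xs \<subseteq> ?C" using hyperpath_in_reach_class(1)[OF p(1) order_refl] C by simp
    ultimately have "hyperpath (component_of G x) xs es"
      using p(1) unfolding hyperpath_def component_of_def induced_def fst_conv snd_conv by blast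
    then show "\<exists>xs es. hyperpath (component_of G x) xs es \<and> hd xs = y \<and> last xs = z"
      using p by blast
  qed
  have "H' = component_of G x"
    if H': "subhypergraph H' G" "connected_hg H'" "verts (component_of G x) \<subseteq> verts H'"
      "edges (component_of G x) \<subseteq> edges H'" for H'
  proof -
    have "x \<in> verts H'" using H'(3) in_reach_class[of x G] by (auto simp: component_of_def induced_def)
    then have V: "verts H' \<subseteq> ?C"
      using connected_subset_reach_class[OF _ H'(2)] H'(1) by (auto simp: subhypergraph_def)
    then have "verts H' = ?C" using H'(3) by (auto simp: component_of_def induced_def)
    moreover have "edges H' = {e \<in> edges G. e \<subseteq> ?C}"
      using H'(1,4) V by (auto simp: subhypergraph_def hypergraph_def component_of_def induced_def)
    ultimately show ?thesis by (simp add: component_of_def induced_def prod_eq_iff)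
  qed
  then show ?thesis using sub conn by (auto simp: component_def)
qed

lemma component_iff:
  assumes "hypergraph G"
  shows "component G H \<longleftrightarrow> (\<exists>x\<in>verts G. H = component_of G x)"
proof
  assume H: "component G H"
  then have sub: "subhypergraph H G" and conn: "connected_hg H" by (auto simp: component_def)
  then obtain x where xH: "x \<in> verts H" by (auto simp: connected_hg_def)
  have x: "x \<in> verts G" using xH sub by (auto simp: subhypergraph_def)
  have "verts H \<subseteq> reach_class G x"
    using connected_subset_reach_class[OF _ conn xH] sub by (auto simp: subhypergraph_def)
  then have "verts H \<subseteq> verts (component_of G x)" "edges H \<subseteq> edges (component_of G x)"
    using sub by (auto simp: subhypergraph_def hypergraph_def component_of_def induced_def)
  moreover have "subhypergraph (component_of G x) G" "connected_hg (component_of G x)"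
    using component_of_component[OF assms x] by (auto simp: component_def)
  ultimately have "component_of G x = H"
    using H unfolding component_def by blast
  then show "\<exists>x\<in>verts G. H = component_of G x" using x by blast
next
  assume "\<exists>x\<in>verts G. H = component_of G x"
  then show "component G H" using component_of_component[OF assms] by blast
qed

text \<open>These are exactly the unions of vertex sets of components of the hypergraph G \<div> S.\<close>
definition separated_by :: "'a hg \<Rightarrow> 'a set \<Rightarrow> 'a set \<Rightarrow> bool" where
  "separated_by G S U \<longleftrightarrow> U \<subseteq> verts G - S \<and> (\<forall>e\<in>edges G. e \<inter> U \<noteq> {} \<longrightarrow> e - S \<subseteq> U)"

lemma separated_by_complement:
  assumes "hypergraph G" "separated_by G S U"
  shows "separated_by G S (verts G - S - U)"
  unfolding separated_by_def
proof (intro conjI ballI impI)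
  show "verts G - S - U \<subseteq> verts G - S" by blast
  fix e assume e: "e \<in> edges G" "e \<inter> (verts G - S - U) \<noteq> {}"
  then have "e \<inter> U = {}" using assms(2) unfolding separated_by_def by blast
  moreover have "e \<subseteq> verts G" using e(1) assms(1) by (auto simp: hypergraph_def)
  ultimately show "e - S \<subseteq> verts G - S - U" by blast
qed

lemma separated_by_complement_complement:
  "separated_by G S U \<Longrightarrow> verts G - S - (verts G - S - U) = U"
  unfolding separated_by_def by auto

lemma separated_by_Diff:
  assumes "separated_by G S U" "separated_by G S C"
  shows "separated_by G S (U - C)"
  unfolding separated_by_def
proof (intro conjI ballI impI)
  show "U - C \<subseteq> verts G - S" using assms(1) by (auto simp: separated_by_def)
  fix e assume e: "e \<in> edges G" "e \<inter> (U - C) \<noteq> {}"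
  then obtain x where x: "x \<in> e" "x \<in> U" "x \<notin> C" by blast
  then have "x \<notin> S" using assms(1) by (auto simp: separated_by_def)
  then have "e \<inter> C = {}" using x e(1) assms(2) by (auto simp: separated_by_def)
  moreover have "e - S \<subseteq> U" using e assms(1) by (auto simp: separated_by_def)
  ultimately show "e - S \<subseteq> U - C" by auto
qed

lemma separated_by_edge_cases:
  assumes "hypergraph G" "separated_by G S U" "e \<in> edges G"
  shows "e \<subseteq> U \<union> S \<or> e \<subseteq> (verts G - S - U) \<union> S"
proof (cases "e \<inter> U = {}")
  case True
  moreover have "e \<subseteq> verts G" using assms(1,3) by (auto simp: hypergraph_def)
  ultimately show ?thesis by blast
next
  case False
  then show ?thesis using assms(2,3) unfolding separated_by_def by blast
qed

lemma separating_obtains_separated_by: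
  assumes "hypergraph G" "separating G S"
  obtains U where "separated_by G S U" "U \<noteq> {}" "verts G - S - U \<noteq> {}"
proof -
  obtain X1 X2 where X: "X1 \<subseteq> verts G" "X2 \<subseteq> verts G" "verts G = X1 \<union> X2"
    "edges G = edges (induced G X1) \<union> edges (induced G X2)"
    "X1 \<inter> X2 = S" "card S < card X1" "card S < card X2"
    using assms(2) unfolding separating_def prod_eq_iff fst_conv snd_conv by blast
  from X(4) have E: "\<forall>e\<in>edges G. e \<subseteq> X1 \<or> e \<subseteq> X2" unfolding induced_def snd_conv by blast
  have "S \<subseteq> verts G" using X(1,5) by blast
  then have fin: "finite S" using assms(1) by (auto simp: hypergraph_def intro: finite_subset)
  show ?thesis
  proof
    show "separated_by G S (X1 - S)" using X(1,5) E unfolding separated_by_def by auto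
    show "X1 - S \<noteq> {}" using card_mono[OF fin, of X1] X(6) by auto
    have "verts G - S - (X1 - S) = X2 - S" using X(3,5) by auto
    moreover have "X2 - S \<noteq> {}" using card_mono[OF fin, of X2] X(7) by auto
    ultimately show "verts G - S - (X1 - S) \<noteq> {}" by simp
  qed
qed

lemma hypergraph_delete: "hypergraph G \<Longrightarrow> hypergraph (delete G S)"
  by (auto simp: hypergraph_def delete_def restr_def)

lemma verts_delete: "verts (delete G S) = verts G - S"
  by (simp add: delete_def restr_def)

lemma reach_class_delete_subset:
  assumes "separated_by G S U" "x \<in> U"
  shows "reach_class (delete G S) x \<subseteq> U"
proof
  fix y assume "y \<in> reach_class (delete G S) x"
  then have "(adjacent (delete G S))\<^sup>*\<^sup>* x y" by (simp add: reach_class_def)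
  then show "y \<in> U"
  proof induction
    case base
    then show ?case using assms(2) .
  next
    case (step y z)
    then obtain e where "e \<in> edges G" "y \<in> e" "z \<in> e - S"
      by (auto simp: adjacent_def delete_def restr_def)
    then show ?case using assms(1) step.IH unfolding separated_by_def by blast
  qed
qed

lemma separated_by_reach_class_delete:
  assumes "hypergraph G" "x \<in> verts G - S"
  shows "separated_by G S (reach_class (delete G S) x)"
  unfolding separated_by_def
proof (intro conjI ballI impI)
  let ?C = "reach_class (delete G S) x"
  show CV: "?C \<subseteq> verts G - S"
    using reach_class_subset_verts[OF hypergraph_delete[OF assms(1)]] assms(2) by (simp add: verts_delete)
  fix e assume e: "e \<in> edges G" "e \<inter> ?C \<noteq> {}"
  then obtain u where u: "u \<in> e" "u \<in> ?C" by blast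
  show "e - S \<subseteq> ?C"
  proof
    fix u' assume u': "u' \<in> e - S"
    show "u' \<in> ?C"
    proof (cases "u' = u")
      case True
      then show ?thesis using u by simp
    next
      case False
      have "e \<subseteq> verts G" using e(1) assms(1) by (auto simp: hypergraph_def)
      then have sub: "{u, u'} \<subseteq> e \<inter> (verts G - S)" using u u' CV by blast
      have "finite (e \<inter> (verts G - S))" using assms(1) by (auto simp: hypergraph_def)
      from card_mono[OF this sub] False have "2 \<le> card (e \<inter> (verts G - S))" by simp
      then have "e \<inter> (verts G - S) \<in> edges (delete G S)"
        using e(1) by (auto simp: delete_def restr_def)
      from reach_class_step[OF u(2) this] show ?thesis using sub by blast
    qed
  qed
qed

section \<open>Separating sets of critical hypergraphs\<close>

text \<open>If both sides had colorings with the same pattern on v and w, the two colorings would glue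
  to a k-coloring of G.\<close>
lemma critical_opposite_patterns:
  assumes "critical k G" "S \<subseteq> verts G" "S \<subseteq> {v, w}" "separated_by G S U"
    and "coloring (induced G (U \<union> S)) k f" "coloring (induced G ((verts G - S - U) \<union> S)) k g"
  shows "(f v = f w) \<noteq> (g v = g w)"
proof
  assume same: "(f v = f w) = (g v = g w)"
  have hg: "hypergraph G" using assms(1) by (simp add: critical_def)
  have U: "U \<subseteq> verts G - S" using assms(4) by (simp add: separated_by_def)
  have "\<exists>h. coloring G k h"
  proof (rule colorable_glue[OF _ _ _ assms(5,6)])
    show "verts G = (U \<union> S) \<union> ((verts G - S - U) \<union> S)" using U assms(2) by blast
    show "\<forall>e\<in>edges G. e \<subseteq> U \<union> S \<or> e \<subseteq> (verts G - S - U) \<union> S"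
      using separated_by_edge_cases[OF hg assms(4)] by blast
    have "(U \<union> S) \<inter> ((verts G - S - U) \<union> S) = S" using U by blast
    moreover have "f x = f y \<longleftrightarrow> g x = g y" if "x \<in> S" "y \<in> S" for x y
      using that assms(3) same by (cases "x = v"; cases "y = v") auto
    ultimately show "(U \<union> S) \<inter> ((verts G - S - U) \<union> S) \<subseteq> {v, w}"
      and "\<forall>x\<in>(U \<union> S) \<inter> ((verts G - S - U) \<union> S). \<forall>y\<in>(U \<union> S) \<inter> ((verts G - S - U) \<union> S).
        f x = f y \<longleftrightarrow> g x = g y"
      using assms(3) by auto
  qed
  then show False using critical_not_colorable[OF assms(1)] by blast
qed

lemma critical_separated_colorable:
  assumes "critical k G" "S \<subseteq> verts G" "separated_by G S U" "verts G - S - U \<noteq> {}"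
  shows "\<exists>f. coloring (induced G (U \<union> S)) k f"
proof (rule critical_induced_colorable[OF assms(1)])
  show "U \<union> S \<subseteq> verts G" using assms(2,3) by (auto simp: separated_by_def)
  show "U \<union> S \<noteq> verts G" using assms(4) by blast
qed

lemma critical_separated_complement_colorable:
  assumes "critical k G" "S \<subseteq> verts G" "separated_by G S U" "U \<noteq> {}"
  shows "\<exists>f. coloring (induced G ((verts G - S - U) \<union> S)) k f"
proof (rule critical_separated_colorable[OF assms(1,2)])
  have "hypergraph G" using assms(1) by (simp add: critical_def)
  then show "separated_by G S (verts G - S - U)" using separated_by_complement assms(3) by blast
  show "verts G - S - (verts G - S - U) \<noteq> {}"
    using separated_by_complement_complement[OF assms(3)] assms(4) by simp
qed

lemma critical_separator_pair:
  assumes "critical k G" "S \<subseteq> verts G" "card S \<le> 2"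
    and "separated_by G S U" "U \<noteq> {}" "verts G - S - U \<noteq> {}"
  obtains v w where "v \<noteq> w" "S = {v, w}"
proof (cases "card S = 2")
  case True
  then show ?thesis using that by (auto simp: card_2_iff)
next
  case False
  have "finite S" using assms(1,2) by (auto simp: critical_def hypergraph_def intro: finite_subset)
  then have "\<forall>x\<in>S. \<forall>y\<in>S. x = y" using False assms(3) card_le_Suc0_iff_eq[of S] by simp
  then obtain a where a: "S \<subseteq> {a, a}" by blast
  obtain f g where "coloring (induced G (U \<union> S)) k f"
    "coloring (induced G ((verts G - S - U) \<union> S)) k g"
    using critical_separated_colorable[OF assms(1,2,4,6)]
      critical_separated_complement_colorable[OF assms(1,2,4,5)] by blast
  from critical_opposite_patterns[OF assms(1,2) a assms(4) this] show ?thesis by simp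
qed

lemma critical_separator_independent:
  assumes "critical k G" "{v, w} \<subseteq> verts G"
    and "separated_by G {v, w} U" "U \<noteq> {}" "verts G - {v, w} - U \<noteq> {}"
  shows "{v, w} \<notin> edges G"
proof
  assume edge: "{v, w} \<in> edges G"
  obtain f g where f: "coloring (induced G (U \<union> {v, w})) k f"
    and g: "coloring (induced G ((verts G - {v, w} - U) \<union> {v, w})) k g"
    using critical_separated_colorable[OF assms(1,2,3,5)]
      critical_separated_complement_colorable[OF assms(1,2,3,4)] by blast
  have "f v \<noteq> f w" by (rule coloring_pair_edge[OF f]) (use edge in \<open>simp add: induced_def\<close>)
  moreover have "g v \<noteq> g w" by (rule coloring_pair_edge[OF g]) (use edge in \<open>simp add: induced_def\<close>)
  ultimately show False using critical_opposite_patterns[OF assms(1,2) order_refl assms(3) f g] by simp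
qed

text \<open>Three such sets would need three pairwise opposite patterns on v and w.\<close>
lemma critical_no_three_separated:
  assumes "critical k G" "S \<subseteq> verts G" "S \<subseteq> {v, w}"
    and sep: "separated_by G S A" "separated_by G S B" "separated_by G S C"
    and "A \<noteq> {}" "B \<noteq> {}" "C \<noteq> {}" "A \<inter> B = {}" "A \<inter> C = {}" "B \<inter> C = {}"
  shows False
proof -
  let ?co = "\<lambda>U. verts G - S - U"
  note colorable = critical_separated_complement_colorable[OF assms(1,2)]
  obtain g1 where g1: "coloring (induced G (?co A \<union> S)) k g1" using colorable[OF sep(1) assms(7)] ..
  obtain g2 where g2: "coloring (induced G (?co B \<union> S)) k g2" using colorable[OF sep(2) assms(8)] ..
  obtain h where h: "coloring (induced G (?co C \<union> S)) k h" using colorable[OF sep(3) assms(9)] ..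
  have "B \<subseteq> verts G - S" "C \<subseteq> verts G - S" using sep(2,3) by (simp_all add: separated_by_def)
  then have sub: "B \<union> S \<subseteq> ?co A \<union> S" "C \<union> S \<subseteq> ?co A \<union> S" "C \<union> S \<subseteq> ?co B \<union> S"
    using assms(10-12) by blast+
  note opposite = critical_opposite_patterns[OF assms(1-3)]
  have "(g1 v = g1 w) \<noteq> (h v = h w)" by (rule opposite[OF sep(3) coloring_induced_mono[OF g1 sub(2)] h])
  moreover have "(g2 v = g2 w) \<noteq> (h v = h w)" by (rule opposite[OF sep(3) coloring_induced_mono[OF g2 sub(3)] h])
  moreover have "(g1 v = g1 w) \<noteq> (g2 v = g2 w)" by (rule opposite[OF sep(2) coloring_induced_mono[OF g1 sub(1)] g2])
  ultimately show False by blast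
qed

lemma critical_separated_reach_class:
  assumes "critical k G" "S \<subseteq> verts G" "S \<subseteq> {v, w}"
    and "separated_by G S U" "verts G - S - U \<noteq> {}" "a \<in> U"
  shows "reach_class (delete G S) a = U"
proof (rule ccontr)
  let ?C = "reach_class (delete G S) a"
  assume ne: "?C \<noteq> U"
  have hg: "hypergraph G" using assms(1) by (simp add: critical_def)
  have "a \<in> verts G - S" using assms(4,6) by (auto simp: separated_by_def)
  then have sepC: "separated_by G S ?C" by (rule separated_by_reach_class_delete[OF hg])
  have sub: "?C \<subseteq> U" by (rule reach_class_delete_subset[OF assms(4,6)])
  show False
  proof (rule critical_no_three_separated[OF assms(1-3) sepC separated_by_Diff[OF assms(4) sepC]
        separated_by_complement[OF hg assms(4)]])
    show "?C \<noteq> {}" using in_reach_class by fast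
    show "U - ?C \<noteq> {}" using sub ne by blast
    show "verts G - S - U \<noteq> {}" by (rule assms(5))
  qed (use sub in blast)+
qed

lemma critical_separated_side:
  assumes "critical k G" "S \<subseteq> verts G" "S \<subseteq> {v, w}"
    and "separated_by G S U" "U \<noteq> {}" "verts G - S - U \<noteq> {}"
  obtains U1 where "separated_by G S U1" "U1 \<noteq> {}" "verts G - S - U1 \<noteq> {}"
    "\<forall>\<phi>. coloring (induced G (U1 \<union> S)) k \<phi> \<longrightarrow> \<phi> v = \<phi> w"
proof -
  have hg: "hypergraph G" using assms(1) by (simp add: critical_def)
  note opposite = critical_opposite_patterns[OF assms(1-4)]
  obtain f g where f: "coloring (induced G (U \<union> S)) k f"
    and g: "coloring (induced G ((verts G - S - U) \<union> S)) k g"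
    using critical_separated_colorable[OF assms(1,2,4,6)]
      critical_separated_complement_colorable[OF assms(1,2,4,5)] by blast
  show ?thesis
  proof (cases "f v = f w")
    case True
    then show ?thesis using that[OF assms(4-6)] opposite[OF _ g] opposite[OF f g] by blast
  next
    case False
    have "\<forall>\<psi>. coloring (induced G ((verts G - S - U) \<union> S)) k \<psi> \<longrightarrow> \<psi> v = \<psi> w"
      using opposite[OF f] False by blast
    moreover have "verts G - S - (verts G - S - U) \<noteq> {}"
      using separated_by_complement_complement[OF assms(4)] assms(5) by simp
    ultimately show ?thesis
      using that[OF separated_by_complement[OF hg assms(4)] assms(6)] by blast
  qed
qed

section \<open>Adding an edge and identifying two vertices\<close>

lemma hypergraph_add_edge:
  "hypergraph H \<Longrightarrow> v \<noteq> w \<Longrightarrow> v \<in> verts H \<Longrightarrow> w \<in> verts H \<Longrightarrow> hypergraph (add_edge H v w)"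
  by (auto simp: hypergraph_def add_edge_def)

lemma coloring_add_edge:
  "coloring H k f \<Longrightarrow> f v \<noteq> f w \<Longrightarrow> coloring (add_edge H v w) k f"
  by (auto simp: coloring_def add_edge_def)

lemma coloring_add_edge_fresh_color:
  assumes "hypergraph H" "coloring H k f" "v \<in> verts H" "v \<noteq> w"
  shows "coloring (add_edge H v w) (k + 1) (f(w := k + 1))"
proof (rule coloring_add_edge)
  have range: "\<forall>x\<in>verts H. f x \<in> {1..k}" using assms(2) by (simp add: coloring_def)
  show "coloring H (k + 1) (f(w := k + 1))"
    unfolding coloring_def
  proof (intro conjI ballI)
    fix x assume "x \<in> verts H"
    then show "(f(w := k + 1)) x \<in> {1..k + 1}" using range by auto
  next
    fix e assume e: "e \<in> edges H"
    show "\<exists>x\<in>e. \<exists>y\<in>e. (f(w := k + 1)) x \<noteq> (f(w := k + 1)) y"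
    proof (cases "w \<in> e")
      case True
      have "2 \<le> card e" using e assms(1) by (simp add: hypergraph_def)
      then obtain x y where "x \<in> e" "y \<in> e" "x \<noteq> y" by (rule two_le_card_obtains)
      then obtain z where z: "z \<in> e" "z \<noteq> w" by blast
      have "e \<subseteq> verts H" using e assms(1) by (auto simp: hypergraph_def)
      then have "f z \<in> {1..k}" using z range by auto
      then show ?thesis using z True by (intro bexI[of _ z] bexI[of _ w]) auto
    next
      case False
      then show ?thesis using e assms(2) by (fastforce simp: coloring_def)
    qed
  qed
  show "(f(w := k + 1)) v \<noteq> (f(w := k + 1)) w"
    using assms(2-4) by (auto simp: coloring_def)
qed

definition merge :: "'a \<Rightarrow> 'a \<Rightarrow> 'a \<Rightarrow> 'a option" where
  "merge v w x = (if x \<in> {v, w} then None else Some x)"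

lemma image_merge:
  "merge v w ` e = (if e \<inter> {v, w} \<noteq> {} then Some ` (e - {v, w}) \<union> {None} else Some ` e)"
  by (auto simp: merge_def image_iff)

lemma identify_eq:
  "identify H v w = (Some ` (verts H - {v, w}) \<union> {None}, image (merge v w) ` edges H)"
  unfolding identify_def image_merge by simp

lemma hypergraph_identify:
  assumes "hypergraph H" "\<forall>e\<in>edges H. \<not> e \<subseteq> {v, w}"
  shows "hypergraph (identify H v w)"
proof -
  have "2 \<le> card (merge v w ` e)" if e: "e \<in> edges H" for e
  proof (cases "e \<inter> {v, w} = {}")
    case True
    then have "inj_on (merge v w) e" by (auto simp: inj_on_def merge_def)
    then show ?thesis using e assms(1) by (simp add: card_image hypergraph_def)
  next
    case False
    then obtain x where x: "x \<in> e" "x \<in> {v, w}" by blast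
    obtain z where z: "z \<in> e" "z \<notin> {v, w}" using e assms(2) by blast
    have "finite e" using e assms(1) by (auto simp: hypergraph_def intro: finite_subset)
    moreover have "{Some z, None} \<subseteq> merge v w ` e"
      using x z by (auto simp: merge_def image_iff)
    ultimately show ?thesis using card_mono[of "merge v w ` e" "{Some z, None}"] by simp
  qed
  moreover have "merge v w ` e \<subseteq> Some ` (verts H - {v, w}) \<union> {None}" if "e \<in> edges H" for e
    using that assms(1) by (auto simp: hypergraph_def merge_def)
  ultimately show ?thesis using assms(1) by (auto simp: hypergraph_def identify_eq)
qed

lemma coloring_identify_fresh_color:
  assumes "hypergraph H" "coloring H k f" "\<forall>e\<in>edges H. \<not> e \<subseteq> {v, w}"
  shows "coloring (identify H v w) (k + 1) (case_option (k + 1) f)"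
  unfolding coloring_def identify_eq fst_conv snd_conv
proof (intro conjI ballI)
  have range: "\<forall>x\<in>verts H. f x \<in> {1..k}" using assms(2) by (simp add: coloring_def)
  fix a assume "a \<in> Some ` (verts H - {v, w}) \<union> {None}"
  then show "case_option (k + 1) f a \<in> {1..k + 1}" using range by auto
next
  fix h assume "h \<in> image (merge v w) ` edges H"
  then obtain e where e: "e \<in> edges H" "h = merge v w ` e" by blast
  have in_h: "merge v w x \<in> h" if "x \<in> e" for x using e(2) that by simp
  show "\<exists>a\<in>h. \<exists>b\<in>h. case_option (k + 1) f a \<noteq> case_option (k + 1) f b"
  proof (cases "e \<inter> {v, w} = {}")
    case True
    obtain x y where xy: "x \<in> e" "y \<in> e" "f x \<noteq> f y" using e(1) assms(2) by (auto simp: coloring_def)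
    then have "merge v w x = Some x" "merge v w y = Some y" using True by (auto simp: merge_def)
    then show ?thesis using in_h[OF xy(1)] in_h[OF xy(2)] xy(3)
      by (intro bexI[of _ "Some x"] bexI[of _ "Some y"]) auto
  next
    case False
    then obtain x where x: "x \<in> e" "x \<in> {v, w}" by blast
    obtain z where z: "z \<in> e" "z \<notin> {v, w}" using e(1) assms(3) by blast
    have "e \<subseteq> verts H" using e(1) assms(1) by (auto simp: hypergraph_def)
    then have "f z \<in> {1..k}" using z assms(2) by (auto simp: coloring_def)
    moreover have "merge v w x = None" "merge v w z = Some z" using x z by (auto simp: merge_def)
    ultimately show ?thesis using in_h[OF x(1)] in_h[OF z(1)]
      by (intro bexI[of _ None] bexI[of _ "Some z"]) auto
  qed
qed

lemma coloring_identify_lift: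
  assumes "coloring (identify H v w) k \<phi>"
  shows "coloring H k (\<phi> \<circ> merge v w)"
  unfolding coloring_def
proof (intro conjI ballI)
  fix x assume "x \<in> verts H"
  then have "merge v w x \<in> verts (identify H v w)" by (auto simp: identify_eq merge_def)
  then show "(\<phi> \<circ> merge v w) x \<in> {1..k}" using assms by (simp add: coloring_def)
next
  fix e assume "e \<in> edges H"
  then have "merge v w ` e \<in> edges (identify H v w)" by (simp add: identify_eq)
  then obtain a b where "a \<in> merge v w ` e" "b \<in> merge v w ` e" "\<phi> a \<noteq> \<phi> b"
    using assms unfolding coloring_def by blast
  then show "\<exists>x\<in>e. \<exists>y\<in>e. (\<phi> \<circ> merge v w) x \<noteq> (\<phi> \<circ> merge v w) y" by auto
qed

lemma coloring_identify_merge: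
  assumes "coloring H k g" "g v = g w" "v \<in> verts H"
  shows "coloring (identify H v w) k (g \<circ> case_option v id)"
  unfolding coloring_def
proof (intro conjI ballI)
  fix a assume "a \<in> verts (identify H v w)"
  then show "(g \<circ> case_option v id) a \<in> {1..k}"
    using assms(1,3) by (auto simp: coloring_def identify_eq)
next
  have merged: "(g \<circ> case_option v id) (merge v w x) = g x" for x
    using assms(2) by (auto simp: merge_def)
  fix h assume "h \<in> edges (identify H v w)"
  then obtain e where e: "e \<in> edges H" "h = merge v w ` e" by (auto simp: identify_eq)
  then obtain x y where "x \<in> e" "y \<in> e" "g x \<noteq> g y" using assms(1) by (auto simp: coloring_def)
  then show "\<exists>a\<in>h. \<exists>b\<in>h. (g \<circ> case_option v id) a \<noteq> (g \<circ> case_option v id) b"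
    using e(2) merged by (metis image_eqI)
qed

definition identify_preimage :: "'a hg \<Rightarrow> 'a \<Rightarrow> 'a \<Rightarrow> 'a option hg \<Rightarrow> 'a hg" where
  "identify_preimage K v w H =
    ({x \<in> verts K - {v, w}. Some x \<in> verts H} \<union> {v, w}, {e \<in> edges K. merge v w ` e \<in> edges H})"

lemma identify_preimage_edge_subset:
  assumes "hypergraph K" "hypergraph H" "e \<in> edges (identify_preimage K v w H)"
  shows "e \<subseteq> verts (identify_preimage K v w H)"
proof
  fix x assume x: "x \<in> e"
  have "merge v w ` e \<in> edges H" "e \<in> edges K" using assms(3) by (auto simp: identify_preimage_def)
  then have "merge v w ` e \<subseteq> verts H" "e \<subseteq> verts K"
    using assms(1,2) unfolding hypergraph_def by blast+
  then show "x \<in> verts (identify_preimage K v w H)"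
    using x by (cases "x \<in> {v, w}") (auto simp: identify_preimage_def merge_def)
qed

lemma subhypergraph_identify_preimage:
  assumes "subhypergraph H (identify K v w)"
  shows "verts H \<subseteq> verts (identify (identify_preimage K v w H) v w)"
    "edges H \<subseteq> edges (identify (identify_preimage K v w H) v w)"
proof
  fix a assume a: "a \<in> verts H"
  then have "a \<in> Some ` (verts K - {v, w}) \<union> {None}"
    using assms by (auto simp: subhypergraph_def identify_eq)
  then show "a \<in> verts (identify (identify_preimage K v w H) v w)"
    using a by (auto simp: identify_eq identify_preimage_def)
next
  show "edges H \<subseteq> edges (identify (identify_preimage K v w H) v w)"
    using assms by (auto simp: subhypergraph_def identify_eq identify_preimage_def)
qed

locale critical_two_sides =
  fixes G :: "'a hg" and k :: nat and v w :: 'a and U1 U2 :: "'a set"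
  assumes critical: "critical k G"
    and distinct: "v \<noteq> w" and in_verts: "{v, w} \<subseteq> verts G"
    and separated: "separated_by G {v, w} U1" and complement: "U2 = verts G - {v, w} - U1"
    and nonempty: "U1 \<noteq> {}" "U2 \<noteq> {}"
    and side1_equal: "\<forall>\<phi>. coloring (induced G (U1 \<union> {v, w})) k \<phi> \<longrightarrow> \<phi> v = \<phi> w"
begin

abbreviation G1 :: "'a hg" where "G1 \<equiv> induced G (U1 \<union> {v, w})"
abbreviation G2 :: "'a hg" where "G2 \<equiv> induced G (U2 \<union> {v, w})"

lemma hypergraph_G: "hypergraph G"
  using critical by (simp add: critical_def)

lemma sides: "U1 \<subseteq> verts G - {v, w}" "U2 \<subseteq> verts G - {v, w}" "U1 \<inter> U2 = {}"
  using separated complement by (auto simp: separated_by_def)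

lemma hypergraph_G1: "hypergraph G1"
  by (rule hypergraph_induced[OF hypergraph_G]) (use sides(1) in_verts in auto)

lemma hypergraph_G2: "hypergraph G2"
  by (rule hypergraph_induced[OF hypergraph_G]) (use sides(2) in_verts in auto)

lemma separated2: "separated_by G {v, w} U2"
  unfolding complement by (rule separated_by_complement[OF hypergraph_G separated])

lemma side1_colorable: "\<exists>\<phi>. coloring G1 k \<phi>"
  using critical_separated_colorable[OF critical in_verts separated] nonempty(2) complement by simp

lemma side2_colorable: "\<exists>\<phi>. coloring G2 k \<phi>"
  using critical_separated_complement_colorable[OF critical in_verts separated nonempty(1)] complement
  by simp

lemma side2_distinct: "coloring G2 k \<phi> \<Longrightarrow> \<phi> v \<noteq> \<phi> w"
proof -
  assume \<phi>: "coloring G2 k \<phi>"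
  obtain f where f: "coloring G1 k f" using side1_colorable ..
  have "(f v = f w) \<noteq> (\<phi> v = \<phi> w)"
    using critical_opposite_patterns[OF critical in_verts order_refl separated f] \<phi> complement by simp
  then show "\<phi> v \<noteq> \<phi> w" using side1_equal f by blast
qed

lemma independent: "{v, w} \<notin> edges G"
  using critical_separator_independent[OF critical in_verts separated nonempty(1)] nonempty(2) complement
  by simp

lemma edge_not_in_pair: "e \<in> edges G \<Longrightarrow> \<not> e \<subseteq> {v, w}"
proof
  assume e: "e \<in> edges G" "e \<subseteq> {v, w}"
  have "2 \<le> card e" using e(1) hypergraph_G by (simp add: hypergraph_def)
  then have "card {v, w} \<le> card e" using distinct by simp
  then have "e = {v, w}" using card_seteq[OF _ e(2)] by simp
  then show False using e(1) independent by simp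
qed

lemma edge_sides: "edges G = edges G1 \<union> edges G2"
  using separated_by_edge_cases[OF hypergraph_G separated] complement by (auto simp: induced_def)

lemma edge_not_both: "e \<in> edges G1 \<Longrightarrow> e \<in> edges G2 \<Longrightarrow> False"
proof -
  assume "e \<in> edges G1" "e \<in> edges G2"
  then have "e \<in> edges G" "e \<subseteq> (U1 \<union> {v, w}) \<inter> (U2 \<union> {v, w})" by (auto simp: induced_def)
  moreover have "(U1 \<union> {v, w}) \<inter> (U2 \<union> {v, w}) = {v, w}" using sides(3) by auto
  ultimately show False using edge_not_in_pair by auto
qed

lemma assembled_eq_G:
  assumes "(X1 \<union> X2, F1 \<union> F2) = G" "X1 \<subseteq> U1 \<union> {v, w}" "X2 \<subseteq> U2 \<union> {v, w}"
    and "F1 \<subseteq> edges G1" "F2 \<subseteq> edges G2"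
  shows "U1 \<subseteq> X1" "U2 \<subseteq> X2" "F1 = edges G1" "F2 = edges G2"
proof -
  have V: "verts G = X1 \<union> X2" and E: "edges G = F1 \<union> F2"
    using arg_cong[OF assms(1), of fst] arg_cong[OF assms(1), of snd] by simp_all
  show "U1 \<subseteq> X1" "U2 \<subseteq> X2" using V sides assms(2,3) by auto
  have "edges G1 \<union> edges G2 = F1 \<union> F2" using E edge_sides by simp
  then have "e \<in> F1 \<union> F2" if "e \<in> edges G1 \<union> edges G2" for e
    using that by simp
  then show "F1 = edges G1" "F2 = edges G2"
    using assms(4,5) edge_not_both by blast+
qed

lemma add_edge_proper_colorable:
  assumes "subhypergraph H (add_edge G1 v w)" "H \<noteq> add_edge G1 v w"
  shows "\<exists>f. coloring H k f"
proof (cases "{v, w} \<in> edges H")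
  case False
  obtain f where "coloring G1 k f" using side1_colorable ..
  moreover have "verts H \<subseteq> verts G1" "edges H \<subseteq> edges G1"
    using assms(1) False by (auto simp: subhypergraph_def add_edge_def)
  ultimately show ?thesis using coloring_subhypergraph by blast
next
  case True
  have H: "hypergraph H" "verts H \<subseteq> U1 \<union> {v, w}" "edges H \<subseteq> insert {v, w} (edges G1)"
    using assms(1) by (auto simp: subhypergraph_def add_edge_def induced_def)
  have vw: "{v, w} \<subseteq> verts H" using True H(1) by (auto simp: hypergraph_def)
  define Gs where "Gs = (verts H \<union> (U2 \<union> {v, w}), (edges H - {{v, w}}) \<union> edges G2)"
  have sub: "subhypergraph Gs G"
  proof (rule subhypergraphI[OF hypergraph_G])
    show "verts Gs \<subseteq> verts G" using H(2) sides in_verts by (auto simp: Gs_def)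
    show "edges Gs \<subseteq> edges G" using H(3) by (auto simp: Gs_def induced_def)
    show "\<forall>e\<in>edges Gs. e \<subseteq> verts Gs" using H(1) by (auto simp: Gs_def hypergraph_def induced_def)
  qed
  have "Gs \<noteq> G"
  proof
    assume "Gs = G"
    then have eq: "(verts H \<union> (U2 \<union> {v, w}), (edges H - {{v, w}}) \<union> edges G2) = G"
      by (simp add: Gs_def)
    have "edges H - {{v, w}} \<subseteq> edges G1" using H(3) by blast
    note assembled = assembled_eq_G[OF eq H(2) order_refl this order_refl]
    have "verts H = U1 \<union> {v, w}" using assembled(1) H(2) vw by blast
    moreover have "edges H = insert {v, w} (edges G1)" using assembled(3) True by auto
    ultimately have "H = add_edge G1 v w" by (simp add: prod_eq_iff add_edge_def induced_def)
    then show False using assms(2) by simp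
  qed
  then obtain g where g: "coloring Gs k g" using critical_proper_colorable[OF critical sub] by blast
  have "coloring G2 k g" by (rule coloring_subhypergraph[OF g]) (auto simp: Gs_def induced_def)
  then have "coloring (add_edge Gs v w) k g" using coloring_add_edge[OF g] side2_distinct by blast
  then show ?thesis
    by (intro exI, rule coloring_subhypergraph) (auto simp: Gs_def add_edge_def)
qed

theorem critical_add_edge: "critical k (add_edge G1 v w)"
proof -
  obtain f where f: "coloring G1 k f" using side1_colorable ..
  show ?thesis
  proof (rule criticalI)
    show "hypergraph (add_edge G1 v w)"
      using hypergraph_add_edge[OF hypergraph_G1 distinct] by (simp add: induced_def)
    show "coloring (add_edge G1 v w) (k + 1) (f(w := k + 1))"
      using coloring_add_edge_fresh_color[OF hypergraph_G1 f _ distinct] by (simp add: induced_def)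
    show "\<not> coloring (add_edge G1 v w) k \<phi>" for \<phi>
    proof
      assume \<phi>: "coloring (add_edge G1 v w) k \<phi>"
      then have "\<phi> v \<noteq> \<phi> w" using coloring_pair_edge by (fastforce simp: add_edge_def)
      moreover have "coloring G1 k \<phi>" by (rule coloring_subhypergraph[OF \<phi>]) (auto simp: add_edge_def)
      ultimately show False using side1_equal by blast
    qed
  qed (rule add_edge_proper_colorable)
qed

lemma identify_proper_colorable_unmerged:
  assumes "subhypergraph H (identify G2 v w)" "None \<notin> verts H"
  shows "\<exists>f. coloring H k f"
proof -
  have "U2 \<subseteq> verts G" "U2 \<noteq> verts G" using sides in_verts by auto
  then obtain f where f: "coloring (induced G U2) k f" using critical_induced_colorable[OF critical] by blast
  have H: "hypergraph H" "verts H \<subseteq> Some ` U2" "edges H \<subseteq> image (merge v w) ` edges G2"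
    using assms sides(2) by (auto simp: subhypergraph_def identify_eq induced_def)
  have "coloring H k (f \<circ> the)"
    unfolding coloring_def
  proof (intro conjI ballI)
    fix a assume "a \<in> verts H"
    then show "(f \<circ> the) a \<in> {1..k}" using H(2) f by (auto simp: coloring_def induced_def)
  next
    fix h assume h: "h \<in> edges H"
    then obtain e where e: "e \<in> edges G2" "h = merge v w ` e" using H(3) by blast
    have "None \<notin> h" using h H(1) assms(2) by (auto simp: hypergraph_def)
    then have "e \<inter> {v, w} = {}" using e(2) by (auto simp: merge_def)
    then have "e \<in> edges (induced G U2)" and the_merge: "\<forall>x\<in>e. the (merge v w x) = x"
      using e(1) by (auto simp: induced_def merge_def)
    then obtain x y where "x \<in> e" "y \<in> e" "f x \<noteq> f y" using f by (auto simp: coloring_def)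
    then show "\<exists>a\<in>h. \<exists>b\<in>h. (f \<circ> the) a \<noteq> (f \<circ> the) b"
      using e(2) the_merge by (metis comp_apply image_eqI)
  qed
  then show ?thesis by blast
qed

text \<open>The preimage of H in G2, together with G1, is a proper subhypergraph of G; its
  coloring is constant on v and w by the choice of the sides, so it descends to H.\<close>
lemma identify_proper_colorable_merged:
  assumes "subhypergraph H (identify G2 v w)" "H \<noteq> identify G2 v w" "None \<in> verts H"
  shows "\<exists>f. coloring H k f"
proof -
  let ?P = "identify_preimage G2 v w H"
  have J: "identify G2 v w = (Some ` U2 \<union> {None}, image (merge v w) ` edges G2)"
  proof -
    have "U2 \<union> {v, w} - {v, w} = U2" using sides(2) by auto
    then show ?thesis by (simp add: identify_eq induced_def)
  qed
  have H: "hypergraph H" "verts H \<subseteq> Some ` U2 \<union> {None}" "edges H \<subseteq> image (merge v w) ` edges G2"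
    using assms(1) J by (auto simp: subhypergraph_def)
  define Gs where "Gs = ((U1 \<union> {v, w}) \<union> verts ?P, edges G1 \<union> edges ?P)"
  have sub: "subhypergraph Gs G"
  proof (rule subhypergraphI[OF hypergraph_G])
    show "verts Gs \<subseteq> verts G" using sides in_verts by (auto simp: Gs_def identify_preimage_def induced_def)
    show "edges Gs \<subseteq> edges G" by (auto simp: Gs_def identify_preimage_def induced_def)
    show "\<forall>e\<in>edges Gs. e \<subseteq> verts Gs"
      using identify_preimage_edge_subset[OF hypergraph_G2 H(1)] by (auto simp: Gs_def induced_def)
  qed
  have "Gs \<noteq> G"
  proof
    assume "Gs = G"
    then have eq: "((U1 \<union> {v, w}) \<union> verts ?P, edges G1 \<union> edges ?P) = G" by (simp add: Gs_def)
    have "verts ?P \<subseteq> U2 \<union> {v, w}" "edges ?P \<subseteq> edges G2"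
      by (auto simp: identify_preimage_def induced_def)
    note assembled = assembled_eq_G[OF eq order_refl this(1) order_refl this(2)]
    have U2: "U2 \<subseteq> verts ?P" and E2: "edges ?P = edges G2" by (fact assembled(2), fact assembled(4))
    have "Some x \<in> verts H" if "x \<in> U2" for x
      using that U2 sides(2) by (auto simp: identify_preimage_def)
    then have VH: "verts H = Some ` U2 \<union> {None}" using H(2) assms(3) by auto
    have "merge v w ` e \<in> edges H" if "e \<in> edges G2" for e
    proof -
      have "e \<in> edges ?P" using that E2 by simp
      then show ?thesis by (simp add: identify_preimage_def)
    qed
    then have "edges H = image (merge v w) ` edges G2" using H(3) by auto
    then show False using VH assms(2) J by (simp add: prod_eq_iff)
  qed
  then obtain g where g: "coloring Gs k g" using critical_proper_colorable[OF critical sub] by blast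
  have "coloring G1 k g" by (rule coloring_subhypergraph[OF g]) (auto simp: Gs_def induced_def)
  then have gvw: "g v = g w" using side1_equal by blast
  have "coloring ?P k g" by (rule coloring_subhypergraph[OF g]) (auto simp: Gs_def)
  moreover have "v \<in> verts ?P" by (simp add: identify_preimage_def)
  ultimately have "coloring (identify ?P v w) k (g \<circ> case_option v id)"
    by (rule coloring_identify_merge[where v = v and w = w, OF _ gvw])
  then show ?thesis using coloring_subhypergraph subhypergraph_identify_preimage[OF assms(1)] by blast
qed

theorem critical_identify: "critical k (identify G2 v w)"
proof -
  have not_pair: "\<forall>e\<in>edges G2. \<not> e \<subseteq> {v, w}" using edge_not_in_pair by (auto simp: induced_def)
  obtain f where f: "coloring G2 k f" using side2_colorable ..
  show ?thesis
  proof (rule criticalI)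
    show "hypergraph (identify G2 v w)" by (rule hypergraph_identify[OF hypergraph_G2 not_pair])
    show "coloring (identify G2 v w) (k + 1) (case_option (k + 1) f)"
      by (rule coloring_identify_fresh_color[OF hypergraph_G2 f not_pair])
    show "\<not> coloring (identify G2 v w) k \<phi>" for \<phi>
    proof
      assume "coloring (identify G2 v w) k \<phi>"
      from side2_distinct[OF coloring_identify_lift[OF this]] show False by (simp add: merge_def)
    qed
    show "\<exists>f. coloring H k f" if "subhypergraph H (identify G2 v w)" "H \<noteq> identify G2 v w" for H
      using identify_proper_colorable_merged identify_proper_colorable_unmerged that by blast
  qed
qed

lemma delete_components:
  obtains H1 H2 where "H1 \<noteq> H2" "verts H1 = U1" "verts H2 = U2"
    "{H. component (delete G {v, w}) H} = {H1, H2}"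
proof
  let ?D = "delete G {v, w}"
  have hD: "hypergraph ?D" by (rule hypergraph_delete[OF hypergraph_G])
  have co: "verts G - {v, w} - U2 = U1"
    using separated_by_complement_complement[OF separated] complement by simp
  have comp1: "component_of ?D x = induced ?D U1" if "x \<in> U1" for x
    using critical_separated_reach_class[OF critical in_verts order_refl separated _ that]
      nonempty(2) complement by (simp add: component_of_def)
  have comp2: "component_of ?D x = induced ?D U2" if "x \<in> U2" for x
    using critical_separated_reach_class[OF critical in_verts order_refl separated2 _ that]
      nonempty(1) co by (simp add: component_of_def)
  have V: "verts ?D = U1 \<union> U2" using sides complement by (auto simp: verts_delete)
  show "verts (induced ?D U1) = U1" "verts (induced ?D U2) = U2" by (simp_all add: induced_def)
  have "U1 \<noteq> U2" using nonempty(1) sides(3) by blast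
  then show "induced ?D U1 \<noteq> induced ?D U2" by (simp add: induced_def)
  show "{H. component ?D H} = {induced ?D U1, induced ?D U2}"
  proof (intro set_eqI iffI)
    fix H assume "H \<in> {H. component ?D H}"
    then obtain x where "x \<in> U1 \<union> U2" "H = component_of ?D x" using component_iff[OF hD] V by auto
    then show "H \<in> {induced ?D U1, induced ?D U2}" using comp1 comp2 by blast
  next
    fix H assume H: "H \<in> {induced ?D U1, induced ?D U2}"
    obtain a b where "a \<in> U1" "b \<in> U2" using nonempty by blast
    then have "a \<in> verts ?D" "b \<in> verts ?D" using V by auto
    then have "\<exists>x\<in>verts ?D. H = component_of ?D x"
      using H comp1[OF \<open>a \<in> U1\<close>] comp2[OF \<open>b \<in> U2\<close>] by (metis insert_iff singletonD)
    then show "H \<in> {H. component ?D H}" using component_iff[OF hD] by simp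
  qed
qed

end

theorem theorem8:
  fixes G :: "'a hg" and k :: nat and S :: "'a set"
  assumes "critical k G" and "k \<ge> 2"
    and "S \<subseteq> verts G" and "separating G S" and "card S \<le> 2"
  shows "\<exists>v w. v \<noteq> w \<and> S = {v, w} \<and> {v, w} \<notin> edges G \<and>
    (\<exists>H1 H2. H1 \<noteq> H2 \<and> {H. component (delete G S) H} = {H1, H2} \<and>
      (let G1 = induced G (verts H1 \<union> S); G2 = induced G (verts H2 \<union> S) in
        (\<exists>\<phi>1. coloring G1 k \<phi>1 \<and> \<phi>1 v = \<phi>1 w) \<and>
        (\<forall>\<phi>. coloring G1 k \<phi> \<longrightarrow> \<phi> v = \<phi> w) \<and>
        (\<forall>\<phi>. coloring G2 k \<phi> \<longrightarrow> \<phi> v \<noteq> \<phi> w) \<and>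
        critical k (add_edge G1 v w) \<and>
        critical k (identify G2 v w)))"
proof -
  have hg: "hypergraph G" using assms(1) by (simp add: critical_def)
  obtain U where U: "separated_by G S U" "U \<noteq> {}" "verts G - S - U \<noteq> {}"
    using separating_obtains_separated_by[OF hg assms(4)] .
  obtain v w where vw: "v \<noteq> w" "S = {v, w}"
    using critical_separator_pair[OF assms(1,3,5) U] .
  obtain U1 where U1: "separated_by G S U1" "U1 \<noteq> {}" "verts G - S - U1 \<noteq> {}"
    "\<forall>\<phi>. coloring (induced G (U1 \<union> S)) k \<phi> \<longrightarrow> \<phi> v = \<phi> w"
    using critical_separated_side[OF assms(1,3) _ U] vw(2) by blast
  interpret critical_two_sides G k v w U1 "verts G - S - U1"
    using assms(1,3) vw U1 by unfold_locales simp_all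
  obtain H1 H2 where H: "H1 \<noteq> H2" "verts H1 = U1" "verts H2 = verts G - S - U1"
    "{H. component (delete G S) H} = {H1, H2}"
    using delete_components vw(2) by blast
  have equal_coloring: "\<exists>\<phi>1. coloring G1 k \<phi>1 \<and> \<phi>1 v = \<phi>1 w"
    using side1_colorable side1_equal by blast
  show ?thesis
    unfolding Let_def vw(2)
  proof (rule exI[of _ v], rule exI[of _ w], intro conjI)
    show "v \<noteq> w" by (rule vw(1))
    show "{v, w} = {v, w}" ..
    show "{v, w} \<notin> edges G" by (rule independent)
  qed (rule exI[of _ H1], rule exI[of _ H2], use H vw(2) equal_coloring side1_equal side2_distinct
      critical_add_edge critical_identify in simp)
qed

end
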